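(* Let $T_{23}=\mathbf{e}^1_1\otimes(\mathbf{e}^2_1\otimes\mathbf{e}^3_1+\mathbf{e}^2_2\otimes\mathbf{e}^3_2+\mathbf{e}^2_3\otimes\mathbf{e}^3_3)+\mathbf{e}^1_2\otimes(\mathbf{e}^2_1\otimes\mathbf{e}^3_2+\mathbf{e}^2_2\otimes\mathbf{e}^3_3+\mathbf{e}^2_3\otimes\mathbf{e}^3_4)\in\mathbb{C}^2\otimes\mathbb{C}^3\otimes\mathbb{C}^4$ (a tensor of rank $4$). Put $\psi(\mathbf{a},\mathbf{b},\mathbf{c})=a_1b_1c_1+a_1b_2c_2+a_1b_3c_3+a_2b_3c_4$ and $\Delta(\mathbf{c})=-c_2^2c_3^2+4c_1c_3^3+4c_2^3c_4-18c_1c_2c_3c_4+27c_1^2c_4^2$. Then a rank-one tensor $P=\mathbf{a}\otimes\mathbf{b}\otimes\mathbf{c}$ lies in the decomposition locus of $T_{23}$ if and only if \[ b_2^2-b_1b_3=0,\quad a_2b_2-a_1b_3=0,\quad a_2b_1-a_1b_2=0,\quad \psi(\mathbf{a},\mathbf{b},\mathbf{c})\neq0,\quad \Delta(\mathbf{c})\neq 0. \]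
   Context: $\mathbf{e}^i_j$ is the $j$-th standard basis vector of the $i$-th factor and $\mathbf{a}=(a_1,a_2)$, $\mathbf{b}=(b_1,b_2,b_3)$, $\mathbf{c}=(c_1,\dots,c_4)$ are nonzero coordinate vectors. The rank of a tensor is the minimal number of rank-one tensors summing to it; $P$ is in the decomposition locus of $T$ if $\mathrm{rk}(T-\lambda P)=\mathrm{rk}(T)-1$ for some $\lambda\in\mathbb{C}$. *)

theory Defs
  imports Complex_Main
begin

text \<open>Tensors in C^2 (x) C^3 (x) C^4 are represented as functions
  nat => nat => nat => complex with 1-based indices; only the entries with
  1 <= i <= 2, 1 <= j <= 3, 1 <= k <= 4 are meaningful (all others are 0).
  Coordinate vectors are functions nat => complex (a i = a_i), of which only the
  coordinates in the relevant index range are used.\<close>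

type_synonym tensor = "nat \<Rightarrow> nat \<Rightarrow> nat \<Rightarrow> complex"

definition in_box :: "nat \<Rightarrow> nat \<Rightarrow> nat \<Rightarrow> bool" where
  "in_box i j k \<longleftrightarrow> 1 \<le> i \<and> i \<le> 2 \<and> 1 \<le> j \<and> j \<le> 3 \<and> 1 \<le> k \<and> k \<le> 4"

definition outer3 :: "(nat \<Rightarrow> complex) \<Rightarrow> (nat \<Rightarrow> complex) \<Rightarrow> (nat \<Rightarrow> complex) \<Rightarrow> tensor" where
  "outer3 a b c = (\<lambda>i j k. if in_box i j k then a i * b j * c k else 0)"

definition nonzero_vec :: "nat \<Rightarrow> (nat \<Rightarrow> complex) \<Rightarrow> bool" where
  "nonzero_vec n v \<longleftrightarrow> (\<exists>i. 1 \<le> i \<and> i \<le> n \<and> v i \<noteq> 0)"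

definition tensor_rank :: "tensor \<Rightarrow> nat" where
  "tensor_rank T = (LEAST r. \<exists>a b c :: nat \<Rightarrow> nat \<Rightarrow> complex.
      T = (\<lambda>i j k. \<Sum>l<r. outer3 (a l) (b l) (c l) i j k))"

definition decomposition_locus :: "tensor \<Rightarrow> tensor set" where
  "decomposition_locus T = {P. (\<exists>a b c. nonzero_vec 2 a \<and> nonzero_vec 3 b \<and> nonzero_vec 4 c
       \<and> P = outer3 a b c)
     \<and> (\<exists>t::complex. tensor_rank (\<lambda>i j k. T i j k - t * P i j k) = tensor_rank T - 1)}"

definition e :: "nat \<Rightarrow> nat \<Rightarrow> complex" where
  "e j = (\<lambda>i. if i = j then 1 else 0)"

definition T23 :: tensor where
  "T23 = (\<lambda>i j k. outer3 (e 1) (e 1) (e 1) i j k + outer3 (e 1) (e 2) (e 2) i j k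
                 + outer3 (e 1) (e 3) (e 3) i j k + outer3 (e 2) (e 1) (e 2) i j k
                 + outer3 (e 2) (e 2) (e 3) i j k + outer3 (e 2) (e 3) (e 4) i j k)"

definition psi :: "(nat \<Rightarrow> complex) \<Rightarrow> (nat \<Rightarrow> complex) \<Rightarrow> (nat \<Rightarrow> complex) \<Rightarrow> complex" where
  "psi a b c = a 1 * b 1 * c 1 + a 1 * b 2 * c 2 + a 1 * b 3 * c 3 + a 2 * b 3 * c 4"

definition Delta :: "(nat \<Rightarrow> complex) \<Rightarrow> complex" where
  "Delta c = - ((c 2)^2 * (c 3)^2) + 4 * c 1 * (c 3)^3 + 4 * (c 2)^3 * c 4
             - 18 * c 1 * c 2 * c 3 * c 4 + 27 * (c 1)^2 * (c 4)^2"

end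

theory Submission
  imports Defs "HOL-Analysis.Analysis" "HOL-Computational_Algebra.Fundamental_Theorem_Algebra"
begin

text \<open>Contracting the third factor of T23 - t P with a vector x of \<complex>^4 gives the 2 \<times> 3 Hankel
  matrix (x (i + j - 1)) minus t (c \<cdot> x) a \<otimes> b. Hence, in a decomposition
  T23 - t P = \<Sum>l<r. A l \<otimes> B l \<otimes> C l, every x annihilated by all C l has a Hankel matrix
  proportional to a \<otimes> b. For r \<le> 2 some nonzero such x is also annihilated by c, which is
  impossible; for r = 3 a nonzero such x forces a \<otimes> b to be a Hankel matrix and t \<psi> = 1.
  Moreover, for r = 3 the vectors dual to C 0, C 1, C 2 and annihilated by c have rank-one Hankel
  matrices, so they are multiples of moment vectors (u^3, u^2 s, u s^2, s^3) at three pairwise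
  non-proportional zeros (u : s) of the binary cubic with coefficients c; such zeros exist exactly
  when \<Delta>(c) \<noteq> 0. Conversely, these three moment vectors together with the Hankel vector of a \<otimes> b
  form a basis of \<complex>^4, and expanding T23 in it writes T23 - P / \<psi> as a sum of three rank-one
  tensors.\<close>

lemma ball_atLeastAtMost_1_4: "(\<forall>k\<in>{1..4::nat}. P k) \<longleftrightarrow> P 1 \<and> P 2 \<and> P 3 \<and> P 4"
proof -
  have "{1..4::nat} = {1, 2, 3, 4}" by auto
  then show ?thesis by simp
qed

lemma nonzero_vec_4_iff: "nonzero_vec 4 x \<longleftrightarrow> x 1 \<noteq> 0 \<or> x 2 \<noteq> 0 \<or> x 3 \<noteq> 0 \<or> x 4 \<noteq> 0"
  using ball_atLeastAtMost_1_4[of "\<lambda>k. x k = 0"] by (auto simp: nonzero_vec_def)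

lemma nonzero_vec_Suc: "nonzero_vec n x \<longleftrightarrow> (\<exists>l<n. x (Suc l) \<noteq> 0)"
  unfolding nonzero_vec_def
proof
  assume "\<exists>i. 1 \<le> i \<and> i \<le> n \<and> x i \<noteq> 0"
  then obtain i where "1 \<le> i" "i \<le> n" "x i \<noteq> 0" by blast
  then show "\<exists>l<n. x (Suc l) \<noteq> 0" by (intro exI[of _ "i - 1"]) auto
next
  assume "\<exists>l<n. x (Suc l) \<noteq> 0"
  then show "\<exists>i. 1 \<le> i \<and> i \<le> n \<and> x i \<noteq> 0" by (auto simp: Suc_le_eq)
qed

lemma sum_lessThan_4: "(\<Sum>l<4::nat. f l) = f 0 + f 1 + f 2 + (f 3 :: 'a::comm_monoid_add)"
  by (simp add: eval_nat_numeral add.assoc)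

lemma sum_lessThan_4_split: "(\<Sum>l<4::nat. f l) = (\<Sum>l<3. f l) + (f 3 :: 'a::comm_monoid_add)"
  by (simp add: numeral_eq_Suc)

definition dot4 :: "(nat \<Rightarrow> complex) \<Rightarrow> (nat \<Rightarrow> complex) \<Rightarrow> complex" where
  "dot4 c x = c 1 * x 1 + c 2 * x 2 + c 3 * x 3 + c 4 * x 4"

lemma nonzero_vec_of_dot4_nonzero: "dot4 g x \<noteq> 0 \<Longrightarrow> nonzero_vec 4 x"
  by (auto simp: dot4_def nonzero_vec_4_iff)

lemma dot4_sum_columns: "dot4 c (\<lambda>m. \<Sum>l<r. w l m * z l) = (\<Sum>l<r. z l * dot4 c (w l))"
  by (simp add: dot4_def sum_distrib_left sum.distrib algebra_simps)

(* \<complex>^4 as the Euclidean space complex \<times> complex \<times> complex \<times> complex, so that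
   linear_injective_imp_surjective applies. *)
definition vec4 :: "complex \<times> complex \<times> complex \<times> complex \<Rightarrow> nat \<Rightarrow> complex" where
  "vec4 p = (\<lambda>k. if k = 1 then fst p else if k = 2 then fst (snd p)
     else if k = 3 then fst (snd (snd p)) else snd (snd (snd p)))"

lemma dot4_system_solvable:
  fixes f :: "nat \<Rightarrow> nat \<Rightarrow> complex"
  assumes "\<And>x. \<forall>m\<in>{1..4}. dot4 (f m) x = 0 \<Longrightarrow> \<not> nonzero_vec 4 x"
  shows "\<exists>x. \<forall>m\<in>{1..4}. dot4 (f m) x = y m"
proof -
  define L where "L p = (dot4 (f 1) (vec4 p), dot4 (f 2) (vec4 p), dot4 (f 3) (vec4 p), dot4 (f 4) (vec4 p))"
    for p
  have "linear L"
    by (rule linearI) (auto simp: L_def dot4_def vec4_def algebra_simps scaleR_conv_of_real)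
  moreover have "inj L"
  proof (rule injI)
    fix p q assume "L p = L q"
    then have "L (p - q) = 0" using \<open>linear L\<close> by (simp add: linear_diff)
    then have "\<not> nonzero_vec 4 (vec4 (p - q))"
      by (intro assms, unfold ball_atLeastAtMost_1_4) (simp add: L_def zero_prod_def)
    then show "p = q" by (simp add: nonzero_vec_4_iff vec4_def prod_eq_iff)
  qed
  ultimately obtain p where "L p = (y 1, y 2, y 3, y 4)"
    using linear_injective_imp_surjective by (metis surj_def)
  then show ?thesis unfolding ball_atLeastAtMost_1_4 by (auto simp: L_def)
qed

lemma dot4_dual_basis:
  fixes f :: "nat \<Rightarrow> nat \<Rightarrow> complex"
  assumes "\<And>x. \<forall>m\<in>{1..4}. dot4 (f m) x = 0 \<Longrightarrow> \<not> nonzero_vec 4 x"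
  obtains X where "\<And>m k. m \<in> {1..4} \<Longrightarrow> dot4 (f m) (X k) = (if m = k then 1 else 0)"
proof -
  have "\<forall>k. \<exists>x. \<forall>m\<in>{1..4}. dot4 (f m) x = (if m = k then 1 else 0)"
    by (intro allI dot4_system_solvable) (use assms in blast)
  from choice[OF this] show thesis using that by blast
qed

lemma dot4_common_zero: "\<exists>x. nonzero_vec 4 x \<and> dot4 f1 x = 0 \<and> dot4 f2 x = 0 \<and> dot4 f3 x = 0"
proof (rule ccontr)
  assume none: "\<not> ?thesis"
  define f where "f m = (if m = 1 then f1 else if m = 2 then f2 else if m = 3 then f3 else (\<lambda>_. 0))" for m :: nat
  have "\<not> nonzero_vec 4 x" if "\<forall>m\<in>{1..4}. dot4 (f m) x = 0" for x
    using none that unfolding ball_atLeastAtMost_1_4 by (auto simp: f_def)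
  then obtain X where "\<And>m k. m \<in> {1..4} \<Longrightarrow> dot4 (f m) (X k) = (if m = k then 1 else 0)"
    using dot4_dual_basis by blast
  from this[of 4 4] show False by (simp add: f_def dot4_def)
qed

lemma inverse_of_independent_columns:
  fixes w :: "nat \<Rightarrow> nat \<Rightarrow> complex"
  assumes "\<And>z. \<forall>m\<in>{1..4}. (\<Sum>l<4. w l m * z l) = 0 \<Longrightarrow> \<forall>l<4. z l = 0"
  obtains z where "\<And>m k. m \<in> {1..4} \<Longrightarrow> (\<Sum>l<4. w l m * z l k) = (if m = k then 1 else 0)"
proof -
  define f where "f m k = w (k - 1) m" for m k
  have f: "dot4 (f m) x = (\<Sum>l<4. w l m * x (Suc l))" for m x
    by (simp add: f_def dot4_def sum_lessThan_4 eval_nat_numeral mult.commute)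
  have "\<not> nonzero_vec 4 x" if "\<forall>m\<in>{1..4}. dot4 (f m) x = 0" for x
    using assms[of "\<lambda>l. x (Suc l)"] that by (simp add: f nonzero_vec_Suc)
  then obtain X where "\<And>m k. m \<in> {1..4} \<Longrightarrow> dot4 (f m) (X k) = (if m = k then 1 else 0)"
    using dot4_dual_basis by blast
  then show thesis by (intro that[of "\<lambda>l k. X k (Suc l)"]) (simp add: f)
qed

definition decomposable :: "tensor \<Rightarrow> nat \<Rightarrow> bool" where
  "decomposable S r \<longleftrightarrow> (\<exists>a b c :: nat \<Rightarrow> nat \<Rightarrow> complex.
      S = (\<lambda>i j k. \<Sum>l<r. outer3 (a l) (b l) (c l) i j k))"

lemma tensor_rank_eqI:
  assumes "decomposable S n" "\<And>r. r < n \<Longrightarrow> \<not> decomposable S r"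
  shows "tensor_rank S = n"
  unfolding tensor_rank_def
  using assms unfolding decomposable_def by (intro Least_equality) (auto simp: not_less[symmetric])

lemma decomposable_tensor_rank: "decomposable S n \<Longrightarrow> decomposable S (tensor_rank S)"
  unfolding tensor_rank_def decomposable_def by (rule LeastI_ex) blast

lemma decomposable_add_outer3:
  assumes "decomposable S r"
  shows "decomposable (\<lambda>i j k. S i j k + outer3 a b c i j k) (Suc r)"
proof -
  obtain A B C where S: "S = (\<lambda>i j k. \<Sum>l<r. outer3 (A l) (B l) (C l) i j k)"
    using assms unfolding decomposable_def by blast
  have "(\<lambda>i j k. S i j k + outer3 a b c i j k)
      = (\<lambda>i j k. \<Sum>l<Suc r. outer3 ((A(r := a)) l) ((B(r := b)) l) ((C(r := c)) l) i j k)"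
    by (simp add: S sum.lessThan_Suc)
  then show ?thesis unfolding decomposable_def by blast
qed

lemma T23_eq: "T23 i j k = (if in_box i j k \<and> k = i + j - 1 then 1 else 0)"
proof (cases "in_box i j k")
  case True
  then have "i = 1 \<or> i = 2" "j = 1 \<or> j = 2 \<or> j = 3" by (auto simp: in_box_def)
  then show ?thesis using True by (elim disjE) (auto simp: T23_def outer3_def e_def)
next
  case False
  then show ?thesis by (simp add: T23_def outer3_def)
qed

abbreviation T23_minus :: "complex \<Rightarrow> (nat \<Rightarrow> complex) \<Rightarrow> (nat \<Rightarrow> complex) \<Rightarrow> (nat \<Rightarrow> complex) \<Rightarrow> tensor"
  where "T23_minus t a b c \<equiv> (\<lambda>i j k. T23 i j k - t * outer3 a b c i j k)"

definition contract3 :: "tensor \<Rightarrow> (nat \<Rightarrow> complex) \<Rightarrow> nat \<Rightarrow> nat \<Rightarrow> complex" where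
  "contract3 S x i j = S i j 1 * x 1 + S i j 2 * x 2 + S i j 3 * x 3 + S i j 4 * x 4"

lemma contract3_outer3:
  "i \<in> {1..2} \<Longrightarrow> j \<in> {1..3} \<Longrightarrow> contract3 (outer3 a b c) x i j = a i * b j * dot4 c x"
  by (simp add: contract3_def outer3_def in_box_def dot4_def algebra_simps)

lemma contract3_sum:
  "contract3 (\<lambda>i j k. \<Sum>l<r. S l i j k) x i j = (\<Sum>l<r. contract3 (S l) x i j)"
  by (simp add: contract3_def sum_distrib_right sum.distrib)

lemma contract3_diff:
  "contract3 (\<lambda>i j k. S i j k - t * P i j k) x i j = contract3 S x i j - t * contract3 P x i j"
  by (simp add: contract3_def algebra_simps)

lemma contract3_T23: "i \<in> {1..2} \<Longrightarrow> j \<in> {1..3} \<Longrightarrow> contract3 T23 x i j = x (i + j - 1)"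
  by (auto simp: contract3_def T23_eq in_box_def)

lemma T23_minus_decomposition_contract:
  fixes A B C :: "nat \<Rightarrow> nat \<Rightarrow> complex"
  assumes "T23_minus t a b c = (\<lambda>i j k. \<Sum>l<r. outer3 (A l) (B l) (C l) i j k)"
    and "i \<in> {1..2}" "j \<in> {1..3}"
  shows "x (i + j - 1) = t * dot4 c x * a i * b j + (\<Sum>l<r. dot4 (C l) x * A l i * B l j)"
proof -
  have "contract3 (T23_minus t a b c) x i j
      = contract3 (\<lambda>i j k. \<Sum>l<r. outer3 (A l) (B l) (C l) i j k) x i j"
    by (simp only: assms(1))
  then show ?thesis
    using assms(2,3)
    by (simp add: contract3_diff contract3_sum contract3_outer3 contract3_T23 algebra_simps)
qed

definition hankel_outer :: "(nat \<Rightarrow> complex) \<Rightarrow> (nat \<Rightarrow> complex) \<Rightarrow> (nat \<Rightarrow> complex) \<Rightarrow> bool" where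
  "hankel_outer x u v \<longleftrightarrow> (\<forall>i\<in>{1..2}. \<forall>j\<in>{1..3}. x (i + j - 1) = u i * v j)"

lemma hankel_outer_iff:
  "hankel_outer x u v \<longleftrightarrow> x 1 = u 1 * v 1 \<and> x 2 = u 1 * v 2 \<and> x 2 = u 2 * v 1
     \<and> x 3 = u 1 * v 3 \<and> x 3 = u 2 * v 2 \<and> x 4 = u 2 * v 3"
proof -
  have "{1..2::nat} = {1, 2}" "{1..3::nat} = {1, 2, 3}" by auto
  then show ?thesis unfolding hankel_outer_def by (auto simp: eval_nat_numeral)
qed

lemma hankel_outer_of_annihilator:
  fixes A B C :: "nat \<Rightarrow> nat \<Rightarrow> complex"
  assumes "T23_minus t a b c = (\<lambda>i j k. \<Sum>l<r. outer3 (A l) (B l) (C l) i j k)"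
    and "\<And>l. l < r \<Longrightarrow> dot4 (C l) x = 0"
  shows "hankel_outer x (\<lambda>i. t * dot4 c x * a i) b"
  unfolding hankel_outer_def
proof (intro ballI)
  fix i j :: nat
  assume "i \<in> {1..2}" "j \<in> {1..3}"
  moreover have "(\<Sum>l<r. dot4 (C l) x * A l i * B l j) = 0"
    by (intro sum.neutral) (simp add: assms(2))
  ultimately show "x (i + j - 1) = t * dot4 c x * a i * b j"
    using T23_minus_decomposition_contract[OF assms(1), where x=x] by simp
qed

lemma hankel_outer_of_dual:
  fixes A B C :: "nat \<Rightarrow> nat \<Rightarrow> complex"
  assumes "T23_minus t a b c = (\<lambda>i j k. \<Sum>l<r. outer3 (A l) (B l) (C l) i j k)"
    and "dot4 c x = 0" "l0 < r" "\<And>l. l < r \<Longrightarrow> dot4 (C l) x = (if l = l0 then 1 else 0)"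
  shows "hankel_outer x (A l0) (B l0)"
  unfolding hankel_outer_def
proof (intro ballI)
  fix i j :: nat
  assume "i \<in> {1..2}" "j \<in> {1..3}"
  have "(\<Sum>l<r. dot4 (C l) x * A l i * B l j) = (\<Sum>l<r. if l = l0 then A l i * B l j else 0)"
    by (rule sum.cong) (simp_all add: assms(4))
  also have "\<dots> = A l0 i * B l0 j" using assms(3) by (simp add: sum.delta)
  finally show "x (i + j - 1) = A l0 i * B l0 j"
    using T23_minus_decomposition_contract[OF assms(1) \<open>i \<in> {1..2}\<close> \<open>j \<in> {1..3}\<close>, where x=x] assms(2)
    by simp
qed

lemma T23_minus_rank_ge_3:
  assumes "decomposable (T23_minus t a b c) r"
  shows "3 \<le> r"
proof (rule ccontr)
  assume "\<not> 3 \<le> r"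
  obtain A B C where d: "T23_minus t a b c = (\<lambda>i j k. \<Sum>l<r. outer3 (A l) (B l) (C l) i j k)"
    using assms unfolding decomposable_def by blast
  obtain x where x: "nonzero_vec 4 x" "dot4 (C 0) x = 0" "dot4 (C 1) x = 0" "dot4 c x = 0"
    using dot4_common_zero by blast
  have "dot4 (C l) x = 0" if "l < r" for l
  proof -
    have "l = 0 \<or> l = 1" using that \<open>\<not> 3 \<le> r\<close> by linarith
    then show ?thesis using x by auto
  qed
  then have "hankel_outer x (\<lambda>i. t * dot4 c x * a i) b" by (rule hankel_outer_of_annihilator[OF d])
  with x show False by (simp add: hankel_outer_iff nonzero_vec_4_iff)
qed

lemma T23_minus_rank_le_3_conditions:
  assumes "decomposable (T23_minus t a b c) r" "r \<le> 3"
  shows "t * psi a b c = 1 \<and> a 2 * b 2 - a 1 * b 3 = 0 \<and> a 2 * b 1 - a 1 * b 2 = 0"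
proof -
  obtain A B C where d: "T23_minus t a b c = (\<lambda>i j k. \<Sum>l<r. outer3 (A l) (B l) (C l) i j k)"
    using assms unfolding decomposable_def by blast
  obtain x where x: "nonzero_vec 4 x" "dot4 (C 0) x = 0" "dot4 (C 1) x = 0" "dot4 (C 2) x = 0"
    using dot4_common_zero by blast
  have "dot4 (C l) x = 0" if "l < r" for l
  proof -
    have "l = 0 \<or> l = 1 \<or> l = 2" using that \<open>r \<le> 3\<close> by linarith
    then show ?thesis using x by auto
  qed
  then have "hankel_outer x (\<lambda>i. t * dot4 c x * a i) b" by (rule hankel_outer_of_annihilator[OF d])
  moreover have "dot4 c x = c 1 * x 1 + c 2 * x 2 + c 3 * x 3 + c 4 * x 4" by (simp add: dot4_def)
  ultimately show ?thesis
    using x(1) unfolding hankel_outer_iff nonzero_vec_4_iff psi_def by algebra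
qed

lemma decomposable_T23: "decomposable T23 4"
proof -
  define A :: "nat \<Rightarrow> nat \<Rightarrow> complex" where "A l i = (if l = 0 then (if i = 1 then 1 else 0)
     else if l = 1 then (if i = 2 then 1 else 0) else if l = 2 then 1 else (if i = 1 then 1 else -1))" for l i
  define B :: "nat \<Rightarrow> nat \<Rightarrow> complex" where "B l j = (if l = 0 then (if j = 1 then 1 else 0)
     else if l = 1 then (if j = 3 then 1 else 0) else if l = 2 then 1 else (if j = 2 then -1 else 1))" for l j
  define C :: "nat \<Rightarrow> nat \<Rightarrow> complex" where "C l k = (if l = 0 then (if k = 1 then 1 else if k = 3 then -1 else 0)
     else if l = 1 then (if k = 4 then 1 else if k = 2 then -1 else 0)
     else if l = 2 then (if k = 2 then 1/2 else if k = 3 then 1/2 else 0)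
     else (if k = 3 then 1/2 else if k = 2 then -1/2 else 0))" for l k
  have "T23 i j k = (\<Sum>l<4. outer3 (A l) (B l) (C l) i j k)" for i j k
  proof (cases "in_box i j k")
    case True
    then have "i = 1 \<or> i = 2" "j = 1 \<or> j = 2 \<or> j = 3" "k = 1 \<or> k = 2 \<or> k = 3 \<or> k = 4"
      unfolding in_box_def by auto
    then show ?thesis using True
      by (elim disjE) (simp_all add: T23_eq outer3_def A_def B_def C_def sum_lessThan_4)
  next
    case False
    then show ?thesis by (simp add: T23_eq outer3_def)
  qed
  then show ?thesis unfolding decomposable_def by blast
qed

lemma tensor_rank_T23: "tensor_rank T23 = 4"
proof (rule tensor_rank_eqI[OF decomposable_T23])
  fix r :: nat
  assume "r < 4"
  show "\<not> decomposable T23 r"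
  proof
    assume "decomposable T23 r"
    \<comment> \<open>with \<open>t = 0\<close> the conditions give the contradiction \<open>0 * \<psi> = 1\<close>\<close>
    then have "decomposable (T23_minus 0 a b c) r" for a b c by simp
    with \<open>r < 4\<close> show False using T23_minus_rank_le_3_conditions by fastforce
  qed
qed

lemma decomposable_T23_minus_5: "decomposable (T23_minus t a b c) 5"
proof -
  have "T23_minus t a b c = (\<lambda>i j k. T23 i j k + outer3 (\<lambda>i. - t * a i) b c i j k)"
    by (simp add: outer3_def fun_eq_iff)
  moreover have "decomposable (\<lambda>i j k. T23 i j k + outer3 (\<lambda>i. - t * a i) b c i j k) (Suc 4)"
    by (rule decomposable_add_outer3[OF decomposable_T23])
  ultimately show ?thesis by simp
qed

lemma tensor_rank_T23_minus_eq_3_iff: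
  "tensor_rank (T23_minus t a b c) = 3 \<longleftrightarrow> decomposable (T23_minus t a b c) 3"
proof
  assume "tensor_rank (T23_minus t a b c) = 3"
  then show "decomposable (T23_minus t a b c) 3"
    using decomposable_tensor_rank[OF decomposable_T23_minus_5[of t a b c]] by simp
next
  assume "decomposable (T23_minus t a b c) 3"
  then show "tensor_rank (T23_minus t a b c) = 3"
    by (rule tensor_rank_eqI) (use T23_minus_rank_ge_3 in fastforce)
qed

lemma decomposition_locus_T23_iff:
  assumes "nonzero_vec 2 a" "nonzero_vec 3 b" "nonzero_vec 4 c"
  shows "outer3 a b c \<in> decomposition_locus T23 \<longleftrightarrow> (\<exists>t. decomposable (T23_minus t a b c) 3)"
  using assms by (auto simp: decomposition_locus_def tensor_rank_T23 tensor_rank_T23_minus_eq_3_iff)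

definition binary_cubic :: "(nat \<Rightarrow> complex) \<Rightarrow> complex \<Rightarrow> complex \<Rightarrow> complex" where
  "binary_cubic c u s = c 1 * u ^ 3 + c 2 * u\<^sup>2 * s + c 3 * u * s\<^sup>2 + c 4 * s ^ 3"

definition moments :: "complex \<Rightarrow> complex \<Rightarrow> nat \<Rightarrow> complex" where
  "moments u s k = u ^ (4 - k) * s ^ (k - 1)"

definition pairwise_nonproportional :: "(nat \<Rightarrow> complex) \<Rightarrow> (nat \<Rightarrow> complex) \<Rightarrow> bool" where
  "pairwise_nonproportional u s \<longleftrightarrow> (\<forall>l<3. \<forall>m<3. l \<noteq> m \<longrightarrow> u l * s m \<noteq> u m * s l)"

lemma less_3_cases: "l < (3::nat) \<longleftrightarrow> l = 0 \<or> l = 1 \<or> l = 2"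
  by auto

lemma pairwise_nonproportional_iff:
  "pairwise_nonproportional u s \<longleftrightarrow>
     u 0 * s 1 \<noteq> u 1 * s 0 \<and> u 0 * s 2 \<noteq> u 2 * s 0 \<and> u 1 * s 2 \<noteq> u 2 * s 1"
  unfolding pairwise_nonproportional_def less_3_cases by (auto simp: mult.commute)

lemma pairwise_nonproportional_iff_product:
  "pairwise_nonproportional u s \<longleftrightarrow>
     (u 0 * s 1 - u 1 * s 0) * (u 0 * s 2 - u 2 * s 0) * (u 1 * s 2 - u 2 * s 1) \<noteq> 0"
  by (simp add: pairwise_nonproportional_iff)

lemma dot4_moments: "dot4 c (moments u s) = binary_cubic c u s"
  by (simp add: dot4_def moments_def binary_cubic_def algebra_simps)

lemma hankel_outer_moments:
  "hankel_outer (moments u s) (\<lambda>i. u ^ (2 - i) * s ^ (i - 1)) (\<lambda>j. u ^ (3 - j) * s ^ (j - 1))"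
  by (simp add: hankel_outer_iff moments_def power2_eq_square power3_eq_cube)

lemma binary_cubic_zero_of_hankel_outer:
  assumes "hankel_outer x u v" "nonzero_vec 4 x" "dot4 c x = 0"
  shows "binary_cubic c (u 1) (u 2) = 0"
  using assms unfolding hankel_outer_iff nonzero_vec_4_iff dot4_def binary_cubic_def by algebra

lemma hankel_outer_dual_pair_nonproportional:
  assumes "hankel_outer x u v" "hankel_outer y u' v'"
    and "dot4 g x = 1" "dot4 g y = 0" "dot4 h x = 0" "dot4 h y = 1"
  shows "u 1 * u' 2 \<noteq> u' 1 * u 2"
  using assms unfolding hankel_outer_iff dot4_def by algebra

lemma moment_combination_first:
  fixes u0 u1 u2 s0 s1 s2 z0 z1 z2 :: complex
  assumes "z0 * u0 ^ 3 + z1 * u1 ^ 3 + z2 * u2 ^ 3 = 0"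
    "z0 * u0\<^sup>2 * s0 + z1 * u1\<^sup>2 * s1 + z2 * u2\<^sup>2 * s2 = 0"
    "z0 * u0 * s0\<^sup>2 + z1 * u1 * s1\<^sup>2 + z2 * u2 * s2\<^sup>2 = 0"
    "z0 * s0 ^ 3 + z1 * s1 ^ 3 + z2 * s2 ^ 3 = 0"
    and "u0 * s1 \<noteq> u1 * s0" "u0 * s2 \<noteq> u2 * s0"
  shows "z0 = 0"
proof -
  \<comment> \<open>pair the relations with the coefficients of \<open>(s1 X - u1 Y)(s2 X - u2 Y) X\<close> and \<open>\<dots> Y\<close>,
    which kill the moment vectors of the last two points\<close>
  have "z0 * u0 * ((u0 * s1 - u1 * s0) * (u0 * s2 - u2 * s0)) = 0"
    "z0 * s0 * ((u0 * s1 - u1 * s0) * (u0 * s2 - u2 * s0)) = 0"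
    using assms(1-4) by algebra+
  moreover have "u0 \<noteq> 0 \<or> s0 \<noteq> 0" using assms(5) by auto
  ultimately show ?thesis using assms(5,6) by auto
qed

lemma moments_independent:
  assumes "pairwise_nonproportional u s"
    and "\<And>k. k \<in> {1..4} \<Longrightarrow> (\<Sum>l<3. z l * moments (u l) (s l) k) = 0"
    and "l < 3"
  shows "z l = 0"
proof -
  have E: "z 0 * u 0 ^ 3 + z 1 * u 1 ^ 3 + z 2 * u 2 ^ 3 = 0"
    "z 0 * (u 0)\<^sup>2 * s 0 + z 1 * (u 1)\<^sup>2 * s 1 + z 2 * (u 2)\<^sup>2 * s 2 = 0"
    "z 0 * u 0 * (s 0)\<^sup>2 + z 1 * u 1 * (s 1)\<^sup>2 + z 2 * u 2 * (s 2)\<^sup>2 = 0"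
    "z 0 * s 0 ^ 3 + z 1 * s 1 ^ 3 + z 2 * s 2 ^ 3 = 0"
    using assms(2)[of 1] assms(2)[of 2] assms(2)[of 3] assms(2)[of 4]
    by (simp_all add: moments_def eval_nat_numeral mult.assoc)
  have P: "u 0 * s 1 \<noteq> u 1 * s 0" "u 0 * s 2 \<noteq> u 2 * s 0" "u 1 * s 2 \<noteq> u 2 * s 1"
    using assms(1) by (simp_all add: pairwise_nonproportional_iff)
  from assms(3) consider "l = 0" | "l = 1" | "l = 2" by linarith
  then show ?thesis
  proof cases
    case 1
    then show ?thesis using moment_combination_first[OF E P(1,2)] by simp
  next
    case 2
    have "z 1 = 0"
      by (rule moment_combination_first[of "z 1" "u 1" "z 0" "u 0" "z 2" "u 2" "s 1" "s 0" "s 2"])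
        (use E P in \<open>simp_all add: ac_simps\<close>)
    then show ?thesis using 2 by simp
  next
    case 3
    have "z 2 = 0"
      by (rule moment_combination_first[of "z 2" "u 2" "z 0" "u 0" "z 1" "u 1" "s 2" "s 0" "s 1"])
        (use E P in \<open>simp_all add: ac_simps\<close>)
    then show ?thesis using 3 by simp
  qed
qed

(* Coefficients of the binary cubic form (s0 X - u0 Y)(s1 X - u1 Y)(s2 X - u2 Y). *)
definition cubic_through :: "(nat \<Rightarrow> complex) \<Rightarrow> (nat \<Rightarrow> complex) \<Rightarrow> nat \<Rightarrow> complex" where
  "cubic_through u s k =
     (if k = 1 then s 0 * s 1 * s 2
      else if k = 2 then - (u 0 * s 1 * s 2 + s 0 * u 1 * s 2 + s 0 * s 1 * u 2)
      else if k = 3 then u 0 * u 1 * s 2 + u 0 * s 1 * u 2 + s 0 * u 1 * u 2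
      else - (u 0 * u 1 * u 2))"

lemma binary_cubic_cubic_through:
  assumes "l < 3"
  shows "binary_cubic (cubic_through u s) (u l) (s l) = 0"
proof -
  from assms consider "l = 0" | "l = 1" | "l = 2" by linarith
  then show ?thesis
    by cases (simp_all add: binary_cubic_def cubic_through_def algebra_simps power2_eq_square power3_eq_cube)
qed

lemma Delta_cubic_through:
  "Delta (cubic_through u s) = - ((u 0 * s 1 - u 1 * s 0) * (u 0 * s 2 - u 2 * s 0) * (u 1 * s 2 - u 2 * s 1))\<^sup>2"
  unfolding Delta_def cubic_through_def by simp algebra

lemma Delta_scaled:
  assumes "\<forall>k\<in>{1..4}. c k = \<kappa> * q k"
  shows "Delta c = \<kappa> ^ 4 * Delta q"
proof -
  have "c 1 = \<kappa> * q 1" "c 2 = \<kappa> * q 2" "c 3 = \<kappa> * q 3" "c 4 = \<kappa> * q 4"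
    using assms unfolding ball_atLeastAtMost_1_4 by auto
  then show ?thesis unfolding Delta_def by algebra
qed

lemma binary_cubic_scaled:
  assumes "\<forall>k\<in>{1..4}. c k = \<kappa> * q k"
  shows "binary_cubic c u s = \<kappa> * binary_cubic q u s"
  using assms unfolding ball_atLeastAtMost_1_4 binary_cubic_def by (simp add: algebra_simps)

lemma quadratic_vieta:
  fixes A B C :: complex
  assumes "A \<noteq> 0"
  shows "\<exists>r1 r2. B = - A * (r1 + r2) \<and> C = A * r1 * r2"
proof -
  define w where "w = csqrt (B\<^sup>2 - 4 * A * C)"
  have w: "w\<^sup>2 = B\<^sup>2 - 4 * A * C" by (simp add: w_def)
  have "B = - A * ((- B + w) / (2 * A) + (- B - w) / (2 * A))"
    using assms by (simp add: field_simps)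
  moreover have "C = A * ((- B + w) / (2 * A)) * ((- B - w) / (2 * A))"
    using assms w by (simp add: field_simps) algebra
  ultimately show ?thesis by blast
qed

lemma cubic_through_of_Delta_nonzero:
  assumes "Delta c \<noteq> 0"
  shows "\<exists>\<kappa> u s. \<forall>k\<in>{1..4}. c k = \<kappa> * cubic_through u s k"
proof (cases "c 4 = 0")
  case False
  obtain r0 where r0: "c 1 + r0 * (c 2 + r0 * (c 3 + r0 * c 4)) = 0"
    using fundamental_theorem_of_algebra_alt[of "[:c 1, c 2, c 3, c 4:]"] False by auto
  obtain r1 r2 where r12: "c 3 + c 4 * r0 = - c 4 * (r1 + r2)" "c 2 + c 3 * r0 + c 4 * r0\<^sup>2 = c 4 * r1 * r2"
    using quadratic_vieta[OF False] by blast
  have "\<forall>k\<in>{1..4}. c k = - c 4 * cubic_through (\<lambda>_. 1) ((!) [r0, r1, r2]) k"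
    unfolding ball_atLeastAtMost_1_4 cubic_through_def using r0 r12 by simp algebra
  then show ?thesis by blast
next
  case True
  with assms have "c 3 \<noteq> 0" by (auto simp: Delta_def)
  then obtain r1 r2 where r12: "c 2 = - c 3 * (r1 + r2)" "c 1 = c 3 * r1 * r2"
    using quadratic_vieta by blast
  have "\<forall>k\<in>{1..4}. c k = c 3 * cubic_through ((!) [0, 1, 1]) ((!) [1, r1, r2]) k"
    unfolding ball_atLeastAtMost_1_4 cubic_through_def using r12 True by (simp add: algebra_simps)
  then show ?thesis by blast
qed

lemma cubic_through_of_zeros:
  assumes "pairwise_nonproportional u s" "\<And>l. l < 3 \<Longrightarrow> binary_cubic c (u l) (s l) = 0"
  shows "\<exists>\<kappa>. \<forall>k\<in>{1..4}. c k = \<kappa> * cubic_through u s k"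
proof -
  define q where "q = cubic_through u s"
  define D where "D = (u 0 * s 1 - u 1 * s 0) * (u 0 * s 2 - u 2 * s 0) * (u 1 * s 2 - u 2 * s 1)"
  have "D \<noteq> 0" using assms(1) by (simp add: D_def pairwise_nonproportional_iff_product)
  have zeros: "binary_cubic c (u 0) (s 0) = 0" "binary_cubic c (u 1) (s 1) = 0" "binary_cubic c (u 2) (s 2) = 0"
    by (simp_all add: assms(2))
  have "D * (c 1 * q 2 - c 2 * q 1) = 0 \<and> D * (c 1 * q 3 - c 3 * q 1) = 0 \<and> D * (c 1 * q 4 - c 4 * q 1) = 0
      \<and> D * (c 2 * q 3 - c 3 * q 2) = 0 \<and> D * (c 2 * q 4 - c 4 * q 2) = 0 \<and> D * (c 3 * q 4 - c 4 * q 3) = 0"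
    using zeros unfolding D_def q_def cubic_through_def binary_cubic_def by simp (intro conjI; algebra)
  then have cross: "c j * q k = c k * q j" if "j \<in> {1..4}" "k \<in> {1..4}" for j k
  proof -
    from that have "j \<in> {1, 2, 3, 4}" "k \<in> {1, 2, 3, 4}" by auto
    with \<open>D \<noteq> 0\<close> \<open>D * (c 1 * q 2 - c 2 * q 1) = 0 \<and> _\<close> show ?thesis by (auto simp: algebra_simps)
  qed
  have "Delta q \<noteq> 0"
    using \<open>D \<noteq> 0\<close> by (simp add: q_def D_def Delta_cubic_through)
  then have "\<not> (q 1 = 0 \<and> q 2 = 0 \<and> q 3 = 0 \<and> q 4 = 0)" by (auto simp: Delta_def)
  then obtain m where m: "m \<in> {1..4}" "q m \<noteq> 0"
    using ball_atLeastAtMost_1_4[of "\<lambda>m. q m = 0"] by blast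
  have "\<forall>k\<in>{1..4}. c k = c m / q m * q k"
    using cross[OF m(1)] m(2) by (simp add: field_simps)
  then show ?thesis unfolding q_def by blast
qed

lemma Delta_nonzero_iff_nonproportional_zeros:
  assumes "nonzero_vec 4 c"
  shows "Delta c \<noteq> 0 \<longleftrightarrow>
    (\<exists>u s. pairwise_nonproportional u s \<and> (\<forall>l<3. binary_cubic c (u l) (s l) = 0))"
proof
  assume "Delta c \<noteq> 0"
  then obtain \<kappa> u s where c: "\<forall>k\<in>{1..4}. c k = \<kappa> * cubic_through u s k"
    using cubic_through_of_Delta_nonzero by blast
  have "Delta c = \<kappa> ^ 4 * Delta (cubic_through u s)" by (rule Delta_scaled[OF c])
  then have "pairwise_nonproportional u s"
    using \<open>Delta c \<noteq> 0\<close> by (simp add: Delta_cubic_through pairwise_nonproportional_iff_product)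
  moreover have "\<forall>l<3. binary_cubic c (u l) (s l) = 0"
    by (simp add: binary_cubic_scaled[OF c] binary_cubic_cubic_through)
  ultimately show "\<exists>u s. pairwise_nonproportional u s \<and> (\<forall>l<3. binary_cubic c (u l) (s l) = 0)"
    by blast
next
  assume "\<exists>u s. pairwise_nonproportional u s \<and> (\<forall>l<3. binary_cubic c (u l) (s l) = 0)"
  then obtain u s where "pairwise_nonproportional u s" "\<forall>l<3. binary_cubic c (u l) (s l) = 0"
    by blast
  moreover obtain \<kappa> where c: "\<forall>k\<in>{1..4}. c k = \<kappa> * cubic_through u s k"
    using cubic_through_of_zeros calculation by blast
  moreover have "\<kappa> \<noteq> 0"
    using assms c by (auto simp: nonzero_vec_def)
  ultimately show "Delta c \<noteq> 0"
    by (simp add: Delta_scaled[OF c] Delta_cubic_through pairwise_nonproportional_iff_product)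
qed

lemma Delta_nonzero_of_T23_minus_decomposition:
  fixes A B C :: "nat \<Rightarrow> nat \<Rightarrow> complex"
  assumes d: "T23_minus t a b c = (\<lambda>i j k. \<Sum>l<3. outer3 (A l) (B l) (C l) i j k)"
    and "nonzero_vec 4 c"
  shows "Delta c \<noteq> 0"
proof -
  define f where "f m = (if m = 4 then c else C (m - 1))" for m
  have "\<not> nonzero_vec 4 x" if "\<forall>m\<in>{1..4}. dot4 (f m) x = 0" for x
  proof -
    have "dot4 c x = 0" "dot4 (C 0) x = 0" "dot4 (C 1) x = 0" "dot4 (C 2) x = 0"
      using that unfolding ball_atLeastAtMost_1_4 by (simp_all add: f_def)
    then have "dot4 (C l) x = 0" if "l < 3" for l
      using that by (auto simp: less_3_cases)
    then have "hankel_outer x (\<lambda>i. t * dot4 c x * a i) b"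
      by (rule hankel_outer_of_annihilator[OF d])
    with \<open>dot4 c x = 0\<close> show ?thesis by (simp add: hankel_outer_iff nonzero_vec_4_iff)
  qed
  then obtain X where X: "\<And>m k. m \<in> {1..4} \<Longrightarrow> dot4 (f m) (X k) = (if m = k then 1 else 0)"
    using dot4_dual_basis by blast
  define Y where "Y l = X (Suc l)" for l
  have Yc: "dot4 c (Y l) = 0" if "l < 3" for l
    using X[of 4 "Suc l"] that by (simp add: f_def Y_def)
  have YC: "dot4 (C m) (Y l) = (if m = l then 1 else 0)" if "m < 3" for m l
    using X[of "Suc m" "Suc l"] that by (simp add: f_def Y_def)
  have hankel: "hankel_outer (Y l) (A l) (B l)" if "l < 3" for l
    by (rule hankel_outer_of_dual[OF d Yc[OF that] that]) (simp add: YC)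
  have "pairwise_nonproportional (\<lambda>l. A l 1) (\<lambda>l. A l 2)"
    unfolding pairwise_nonproportional_def
  proof (intro allI impI)
    fix l m :: nat
    assume "l < 3" "m < 3" "l \<noteq> m"
    then show "A l 1 * A m 2 \<noteq> A m 1 * A l 2"
      by (intro hankel_outer_dual_pair_nonproportional[OF hankel[OF \<open>l < 3\<close>] hankel[OF \<open>m < 3\<close>],
            where g = "C l" and h = "C m"]) (simp_all add: YC)
  qed
  moreover have "binary_cubic c (A l 1) (A l 2) = 0" if "l < 3" for l
  proof (rule binary_cubic_zero_of_hankel_outer[OF hankel[OF that] _ Yc[OF that]])
    show "nonzero_vec 4 (Y l)" by (rule nonzero_vec_of_dot4_nonzero[of "C l"]) (simp add: YC that)
  qed
  ultimately show ?thesis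
    using Delta_nonzero_iff_nonproportional_zeros[OF \<open>nonzero_vec 4 c\<close>] by blast
qed

lemma T23_eq_sum_hankel_basis:
  assumes "\<And>l. l < 4 \<Longrightarrow> hankel_outer (w l) (U l) (V l)"
    and "\<And>m k. m \<in> {1..4} \<Longrightarrow> (\<Sum>l<4. w l m * z l k) = (if m = k then 1 else 0)"
  shows "T23 = (\<lambda>i j k. \<Sum>l<4. outer3 (U l) (V l) (z l) i j k)"
proof (intro ext)
  fix i j k
  show "T23 i j k = (\<Sum>l<4. outer3 (U l) (V l) (z l) i j k)"
  proof (cases "in_box i j k")
    case True
    then have ij: "i \<in> {1..2}" "j \<in> {1..3}" and m: "i + j - 1 \<in> {1..4}" by (auto simp: in_box_def)
    have "T23 i j k = (\<Sum>l<4. w l (i + j - 1) * z l k)"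
      using assms(2)[OF m, of k] True by (auto simp: T23_eq)
    also have "\<dots> = (\<Sum>l<4. U l i * V l j * z l k)"
      using assms(1) ij unfolding hankel_outer_def by (intro sum.cong) auto
    also have "\<dots> = (\<Sum>l<4. outer3 (U l) (V l) (z l) i j k)"
      using True by (simp add: outer3_def)
    finally show ?thesis .
  next
    case False
    then show ?thesis by (simp add: T23_eq outer3_def)
  qed
qed

lemma moment_columns_inverse:
  assumes "pairwise_nonproportional u s" and zeros: "\<And>l. l < 3 \<Longrightarrow> binary_cubic c (u l) (s l) = 0"
    and w: "\<And>l. l < 3 \<Longrightarrow> w l = moments (u l) (s l)" and cw3: "dot4 c (w 3) \<noteq> 0"
  obtains z where "\<And>m k. m \<in> {1..4} \<Longrightarrow> (\<Sum>l<4. w l m * z l k) = (if m = k then 1 else 0)"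
    and "\<And>k. k \<in> {1..4} \<Longrightarrow> z 3 k = c k / dot4 c (w 3)"
proof -
  have "(\<Sum>l<3. z l * dot4 c (w l)) = 0" for z
    by (intro sum.neutral) (simp add: w zeros dot4_moments)
  then have cw: "dot4 c (\<lambda>m. \<Sum>l<4. w l m * z l) = z 3 * dot4 c (w 3)" for z
    unfolding dot4_sum_columns by (simp add: sum_lessThan_4_split)
  have "\<forall>l<4. z l = 0" if sys: "\<forall>m\<in>{1..4}. (\<Sum>l<4. w l m * z l) = 0" for z
  proof -
    have "dot4 c (\<lambda>m. \<Sum>l<4. w l m * z l) = 0"
      using sys unfolding ball_atLeastAtMost_1_4 by (simp add: dot4_def)
    then have "z 3 = 0" using cw cw3 by simp
    moreover have "(\<Sum>l<3. w l m * z l) = (\<Sum>l<3. z l * moments (u l) (s l) m)" for m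
      by (intro sum.cong) (simp_all add: w mult.commute)
    ultimately have "(\<Sum>l<3. z l * moments (u l) (s l) m) = 0" if "m \<in> {1..4}" for m
      using sys that unfolding sum_lessThan_4_split by simp
    then have "z l = 0" if "l < 3" for l
      using moments_independent[OF \<open>pairwise_nonproportional u s\<close> _ that] by blast
    with \<open>z 3 = 0\<close> show ?thesis by (auto simp: less_Suc_eq numeral_eq_Suc)
  qed
  then obtain z where inv: "\<And>m k. m \<in> {1..4} \<Longrightarrow> (\<Sum>l<4. w l m * z l k) = (if m = k then 1 else 0)"
    using inverse_of_independent_columns by blast
  moreover have "z 3 k = c k / dot4 c (w 3)" if "k \<in> {1..4}" for k
  proof -
    have "z 3 k * dot4 c (w 3) = dot4 c (\<lambda>m. \<Sum>l<4. w l m * z l k)"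
      using cw[of "\<lambda>l. z l k"] by simp
    also have "\<dots> = dot4 c (\<lambda>m. if m = k then 1 else 0)"
      using inv by (simp add: dot4_def)
    also have "\<dots> = c k"
    proof -
      from that have "k \<in> {1, 2, 3, 4}" by auto
      then show ?thesis by (auto simp: dot4_def)
    qed
    finally show ?thesis using cw3 by (simp add: field_simps)
  qed
  ultimately show thesis by (rule that)
qed

lemma T23_minus_decomposable_3:
  assumes rel: "a 2 * b 2 - a 1 * b 3 = 0" "a 2 * b 1 - a 1 * b 2 = 0"
    and "psi a b c \<noteq> 0"
    and "pairwise_nonproportional u s" "\<And>l. l < 3 \<Longrightarrow> binary_cubic c (u l) (s l) = 0"
  shows "decomposable (T23_minus (1 / psi a b c) a b c) 3"
proof -
  define y where "y m = (if m = 4 then a 2 * b 3 else a 1 * b m)" for m :: nat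
  define w where "w l = (if l = 3 then y else moments (u l) (s l))" for l :: nat
  define U where "U l = (if l = 3 then a else (\<lambda>i. u l ^ (2 - i) * s l ^ (i - 1)))" for l :: nat
  define V where "V l = (if l = 3 then b else (\<lambda>j. u l ^ (3 - j) * s l ^ (j - 1)))" for l :: nat
  have cy: "dot4 c y = psi a b c" by (simp add: y_def dot4_def psi_def algebra_simps)
  obtain z where inv: "\<And>m k. m \<in> {1..4} \<Longrightarrow> (\<Sum>l<4. w l m * z l k) = (if m = k then 1 else 0)"
    and z3: "\<And>k. k \<in> {1..4} \<Longrightarrow> z 3 k = c k / psi a b c"
    by (rule moment_columns_inverse[of u s c w]) (use assms(3-5) cy in \<open>auto simp: w_def\<close>)
  have "hankel_outer y a b"
    using rel by (simp add: hankel_outer_iff y_def)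
  then have "hankel_outer (w l) (U l) (V l)" if "l < 4" for l
    using hankel_outer_moments[of "u l" "s l"] by (simp add: w_def U_def V_def)
  then have T23: "T23 = (\<lambda>i j k. \<Sum>l<4. outer3 (U l) (V l) (z l) i j k)"
    by (rule T23_eq_sum_hankel_basis[OF _ inv])
  have "T23_minus (1 / psi a b c) a b c = (\<lambda>i j k. \<Sum>l<3. outer3 (U l) (V l) (z l) i j k)"
  proof (intro ext)
    fix i j k
    have "outer3 a b (z 3) i j k = 1 / psi a b c * outer3 a b c i j k"
      using z3 by (simp add: outer3_def in_box_def)
    then show "T23 i j k - 1 / psi a b c * outer3 a b c i j k = (\<Sum>l<3. outer3 (U l) (V l) (z l) i j k)"
      by (simp add: T23 sum_lessThan_4_split U_def V_def)
  qed
  then show ?thesis unfolding decomposable_def by blast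
qed

lemma hankel_relations_imp_square:
  assumes "a 2 * b 2 - a 1 * b 3 = 0" "a 2 * b 1 - a 1 * b 2 = 0" "nonzero_vec 2 a"
  shows "b 2 ^ 2 - b 1 * b 3 = (0::complex)"
proof -
  obtain i where "1 \<le> i" "i \<le> 2" "a i \<noteq> 0" using assms(3) unfolding nonzero_vec_def by blast
  moreover from \<open>1 \<le> i\<close> \<open>i \<le> 2\<close> have "i = 1 \<or> i = 2" by auto
  ultimately have "a 1 \<noteq> 0 \<or> a 2 \<noteq> 0" by auto
  then show ?thesis using assms(1,2) by algebra
qed

theorem mainTheorem11:
  fixes a b c :: "nat \<Rightarrow> complex"
  assumes "nonzero_vec 2 a" and "nonzero_vec 3 b" and "nonzero_vec 4 c"
  shows "outer3 a b c \<in> decomposition_locus T23 \<longleftrightarrow>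
    (b 2 ^ 2 - b 1 * b 3 = 0 \<and> a 2 * b 2 - a 1 * b 3 = 0 \<and> a 2 * b 1 - a 1 * b 2 = 0
     \<and> psi a b c \<noteq> 0 \<and> Delta c \<noteq> 0)"
proof -
  note locus = decomposition_locus_T23_iff[OF assms]
  note zeros = Delta_nonzero_iff_nonproportional_zeros[OF assms(3)]
  show ?thesis
  proof
    assume "outer3 a b c \<in> decomposition_locus T23"
    then obtain t where d: "decomposable (T23_minus t a b c) 3" using locus by blast
    then have "t * psi a b c = 1" and rel: "a 2 * b 2 - a 1 * b 3 = 0" "a 2 * b 1 - a 1 * b 2 = 0"
      using T23_minus_rank_le_3_conditions by blast+
    moreover have "Delta c \<noteq> 0"
      using d Delta_nonzero_of_T23_minus_decomposition assms(3) unfolding decomposable_def by blast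
    ultimately show "b 2 ^ 2 - b 1 * b 3 = 0 \<and> a 2 * b 2 - a 1 * b 3 = 0 \<and> a 2 * b 1 - a 1 * b 2 = 0
      \<and> psi a b c \<noteq> 0 \<and> Delta c \<noteq> 0"
      using hankel_relations_imp_square[OF rel assms(1)] by auto
  next
    assume rhs: "b 2 ^ 2 - b 1 * b 3 = 0 \<and> a 2 * b 2 - a 1 * b 3 = 0 \<and> a 2 * b 1 - a 1 * b 2 = 0
      \<and> psi a b c \<noteq> 0 \<and> Delta c \<noteq> 0"
    then obtain u s where "pairwise_nonproportional u s" "\<forall>l<3. binary_cubic c (u l) (s l) = 0"
      using zeros by blast
    with rhs have "decomposable (T23_minus (1 / psi a b c) a b c) 3"
      by (intro T23_minus_decomposable_3) auto
    then show "outer3 a b c \<in> decomposition_locus T23" using locus by blast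
  qed
qed

end
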